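(* Let $R$ be a ring and let $A$, $B$, $C'$ be $n\times n$ matrices over $R$ such that $C'$ differs from the product $C=A\times B$ in at most $k$ entries. Then Algorithm 1 (described in the context), run with parameter $k$, identifies these erroneous entries and corrects them, outputting $C$, in $\tilde{O}(k^2n^2)$ time.
   Context: Running time is measured in a unit-cost model where each ring operation and elementary operation costs $O(1)$; $\tilde{O}$ suppresses factors polylogarithmic in $n$ and $k$. Algorithm 1 (deterministic), on input $A,B,C'$ and $k$: let $L$ be the set of the first $ck\log n/\log\log n$ primes, where $c$ is the absolute constant with the property that for every set $P$ of $l$ distinct indices in $\{1,\dots,n\}$ and every $i\in P$ there is a prime $p$ among the first $cl\log n/\log\log n$ primes with $i\bmod p\neq i'\bmod p$ for all $i'\in P\setminus\{i\}$. Set $C^*\leftarrow C'$, $B^*\leftarrow B$. For each prime $p\in L$: (1) for $j=1,\dots,n$, move column $j$ of $C^*$ into the $(j\bmod p+1)$-th strip (group) of columns of $C^*$, and correspondingly move column $j$ of $B^*$ into the $(j\bmod p+1)$-th strip of columns of $B^*$ (the same permutation applied to columns of both); (2) for each strip $V$ of $C^*$: let $v\in\{0,1\}^n$ have $j$-th coordinate $1$ iff the $j$-th column of $C^*$ belongs to $V$; compute the vectors $A(B^*v^T)$ and $C^*v^T$; for each coordinate $i$ where they differ, compute the entries in row $i$ of the strip of $A\times B^*$ corresponding to $V$ and overwrite row $i$ of $V$ in $C^*$ with them. Finally output $C^*$ (with columns in their original order). *)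

theory Defs
  imports Complex_Main "HOL-Computational_Algebra.Primes"
begin

text \<open>n x n matrices over a ring are functions nat => nat => 'a, indexed by 1..n
  (rows i, columns j in {1..n}); entries outside this range are irrelevant.\<close>

type_synonym 'a matrix = "nat \<Rightarrow> nat \<Rightarrow> 'a"

definition matprod :: "nat \<Rightarrow> 'a::ring_1 matrix \<Rightarrow> 'a matrix \<Rightarrow> 'a matrix" where
  "matprod n A B = (\<lambda>i j. \<Sum>l = 1..n. A i l * B l j)"

definition mat_vec :: "nat \<Rightarrow> 'a::ring_1 matrix \<Rightarrow> (nat \<Rightarrow> 'a) \<Rightarrow> (nat \<Rightarrow> 'a)" where
  "mat_vec n M v = (\<lambda>i. \<Sum>l = 1..n. M i l * v l)"

definition num_errors :: "nat \<Rightarrow> 'a::ring_1 matrix \<Rightarrow> 'a matrix \<Rightarrow> 'a matrix \<Rightarrow> nat" where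
  "num_errors n A B C' = card {(i, j). i \<in> {1..n} \<and> j \<in> {1..n} \<and> C' i j \<noteq> matprod n A B i j}"

text \<open>The factor log n / log log n (natural logarithms); for n <= 2, where log log n
  is not positive, the convention value 1 is used.\<close>
definition logratio :: "nat \<Rightarrow> real" where
  "logratio n = (if n \<le> 2 then 1 else ln (real n) / ln (ln (real n)))"

definition num_primes :: "real \<Rightarrow> nat \<Rightarrow> nat \<Rightarrow> nat" where
  "num_primes c l n = nat \<lceil>c * real l * logratio n\<rceil>"

definition first_primes :: "nat \<Rightarrow> nat list" where
  "first_primes m = sorted_list_of_set {p::nat. prime p \<and> card {q::nat. prime q \<and> q < p} < m}"

definition separating_const :: "real \<Rightarrow> bool" where
  "separating_const c \<longleftrightarrow>
     (\<forall>n l (P :: nat set) i. P \<subseteq> {1..n} \<and> card P = l \<and> i \<in> P \<longrightarrow>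
        (\<exists>p \<in> set (first_primes (num_primes c l n)). \<forall>i' \<in> P - {i}. i mod p \<noteq> i' mod p))"

text \<open>Columns are referred to by their
  original index j, so the strip of column j for prime p is j mod p + 1 (represented by
  the residue r = j mod p); the physical permutation of columns of C* and B* is only
  charged for (2 n^2 + n per prime, n^2 for restoring the original order at the end).
  Pairs (C*, t): current matrix and accumulated cost.\<close>

definition strip_step :: "nat \<Rightarrow> 'a::ring_1 matrix \<Rightarrow> 'a matrix \<Rightarrow> nat \<Rightarrow> nat
    \<Rightarrow> 'a matrix \<times> nat \<Rightarrow> 'a matrix \<times> nat" where
  "strip_step n A B p r = (\<lambda>(Cs, t).
     let V = {j \<in> {1..n}. j mod p = r};
         v = (\<lambda>j. if j \<in> V then 1 else 0);
         x = mat_vec n A (mat_vec n B v);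
         y = mat_vec n Cs v;
         D = {i \<in> {1..n}. x i \<noteq> y i};
         Cs' = (\<lambda>i j. if i \<in> D \<and> j \<in> V then matprod n A B i j else Cs i j)
     in (Cs', t + 6 * n * n + 2 * n + card D * card V * (2 * n + 1)))"

definition prime_step :: "nat \<Rightarrow> 'a::ring_1 matrix \<Rightarrow> 'a matrix \<Rightarrow> nat
    \<Rightarrow> 'a matrix \<times> nat \<Rightarrow> 'a matrix \<times> nat" where
  "prime_step n A B p = (\<lambda>(Cs, t).
     fold (strip_step n A B p) [0..<p] (Cs, t + 2 * n * n + n))"

text \<open>Cost of generating the prime list (charged generously as (largest prime)^2,
  e.g. by trial division).\<close>
definition primes_cost :: "nat list \<Rightarrow> nat" where
  "primes_cost L = (Max (insert 2 (set L)))\<^sup>2"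

definition algorithm1 :: "real \<Rightarrow> nat \<Rightarrow> nat \<Rightarrow> 'a::ring_1 matrix \<Rightarrow> 'a matrix
    \<Rightarrow> 'a matrix \<Rightarrow> 'a matrix \<times> nat" where
  "algorithm1 c n k A B C' =
     (let L = first_primes (num_primes c k n);
          (Cs, t) = fold (prime_step n A B) L (C', primes_cost L)
      in (Cs, t + n * n))"

end

theory Submission
  imports Defs
begin

text \<open>
  Multiplying by the indicator
  vector \<open>v\<close> of a strip, \<open>(A (B v) - C* v)\<^sub>i\<close> is the sum of the errors of row \<open>i\<close>
  inside the strip. Since row \<open>i\<close> has at most \<open>k\<close> wrong entries, the defining property of
  \<open>c\<close> yields a prime \<open>p\<close> among the first \<open>c k log n / log log n\<close> primes that separates
  \<open>j\<close> modulo \<open>p\<close> from the other wrong columns of row \<open>i\<close>. In the strip \<open>j mod p\<close>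
  the sum then has a single nonzero term, so row \<open>i\<close> is detected and recomputed; and
  entries are only ever overwritten by correct values.

  For the cost, each detected row of a strip contains a wrong entry with a column in that
  strip, so one prime \<open>p\<close> costs \<open>O(p n\<^sup>2 + k n\<^sup>2)\<close>. By Chebyshev's argument with the
  central binomial coefficient, \<open>2^N \<le> (2N choose N) \<le> (2N)^\<pi>(2N)\<close>, the
  \<open>m\<close>-th prime is \<open>O(m log m)\<close>, so all primes used are \<open>O(k log\<^sup>2 (n + k))\<close>, and the
  total is \<open>O(k\<^sup>2 n\<^sup>2 log\<^sup>4 (n + k))\<close>.
\<close>

section \<open>Chebyshev's bound on the primes\<close>

definition prime_counting :: "nat \<Rightarrow> nat" where
  "prime_counting x = card {q. prime q \<and> q \<le> x}"

lemma multiplicity_eq_card_prime_power_divisors: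
  fixes p x B :: nat
  assumes p: "prime p" and x: "0 < x" "x < p ^ B"
  shows "multiplicity p x = card ({1..B} \<inter> {i. p ^ i dvd x})"
proof -
  have "p ^ multiplicity p x \<le> x"
    using x by (simp add: multiplicity_dvd dvd_imp_le)
  hence "p ^ multiplicity p x < p ^ B" using x by linarith
  hence "multiplicity p x < B"
    using p prime_gt_1_nat power_less_imp_less_exp by blast
  moreover have iff: "p ^ i dvd x \<longleftrightarrow> i \<le> multiplicity p x" for i
    using x p by (intro power_dvd_iff_le_multiplicity) auto
  ultimately have "{1..B} \<inter> {i. p ^ i dvd x} = {1..multiplicity p x}"
    unfolding iff by auto
  thus ?thesis by simp
qed

lemma legendre_multiplicity_fact:
  fixes p B n :: nat
  assumes p: "prime p" and nB: "n < p ^ B"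
  shows "multiplicity p (fact n) = (\<Sum>i=1..B. n div p ^ i)"
  using nB
proof (induction n)
  case 0
  then show ?case by simp
next
  case (Suc n)
  have "multiplicity p (fact (Suc n) :: nat) = multiplicity p (Suc n * fact n)"
    by simp
  also have "\<dots> = multiplicity p (Suc n) + multiplicity p (fact n :: nat)"
    by (rule prime_elem_multiplicity_mult_distrib) (use p in auto)
  also have "multiplicity p (Suc n) = (\<Sum>i=1..B. if p ^ i dvd Suc n then 1 else 0)"
    using p Suc.prems by (simp add: multiplicity_eq_card_prime_power_divisors sum.If_cases)
  also have "multiplicity p (fact n :: nat) = (\<Sum>i=1..B. n div p ^ i)"
    using Suc by simp
  also have "(\<Sum>i=1..B. if p ^ i dvd Suc n then 1 else 0) + (\<Sum>i=1..B. n div p ^ i)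
      = (\<Sum>i=1..B. Suc n div p ^ i)"
    using p by (subst sum.distrib[symmetric])
      (rule sum.cong, simp_all add: div_Suc dvd_eq_mod_eq_0 prime_gt_0_nat)
  finally show ?case .
qed

lemma double_div_le: "(2 * N) div q \<le> (if q \<le> 2 * N then 1 else 0) + 2 * (N div q)"
  for N q :: nat
proof (cases "q \<le> 2 * N \<and> 0 < q")
  case True
  hence q: "0 < q" by simp
  have e: "2 * N = 2 * (N mod q) + (2 * (N div q)) * q"
    using mod_div_mult_eq[of N q] by (metis distrib_left mult.assoc)
  have "2 * N div q = 2 * (N mod q) div q + 2 * (N div q)"
    using q by (subst e) simp
  moreover have "2 * (N mod q) < 2 * q" using q by simp
  hence "2 * (N mod q) div q < 2" by (rule less_mult_imp_div_less)
  ultimately show ?thesis using True by simp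
next
  case False
  thus ?thesis by auto
qed

lemma prime_power_multiplicity_central_binomial_le:
  fixes p N :: nat
  assumes p: "prime p" and N: "0 < N"
  shows "p ^ multiplicity p ((2 * N) choose N) \<le> 2 * N"
proof -
  define C where "C = (2 * N) choose N"
  define B where "B = 2 * N"
  have p2: "2 \<le> p" using p prime_ge_2_nat by blast
  have "2 * N < 2 ^ B" unfolding B_def by (rule less_exp)
  also have "\<dots> \<le> p ^ B" using p2 by (simp add: power_mono)
  finally have NB: "2 * N < p ^ B" .
  have "C * (fact N * fact N) = (fact (2 * N) :: nat)"
    using binomial_fact_lemma[of N "2 * N"] by (simp add: C_def mult_2 algebra_simps)
  moreover have "C \<noteq> 0" by (simp add: C_def)
  ultimately have "multiplicity p C + 2 * multiplicity p (fact N :: nat)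
      = multiplicity p (fact (2 * N) :: nat)"
    using p by (metis mult_2 prime_elem_multiplicity_mult_distrib prime_imp_prime_elem
        fact_nonzero mult_eq_0_iff)
  hence eq: "multiplicity p C + 2 * (\<Sum>i=1..B. N div p ^ i) = (\<Sum>i=1..B. (2 * N) div p ^ i)"
    using legendre_multiplicity_fact[OF p NB] legendre_multiplicity_fact[of p N B] p NB by simp
  have "(\<Sum>i=1..B. (2 * N) div p ^ i)
      \<le> (\<Sum>i=1..B. (if p ^ i \<le> 2 * N then 1 else 0) + 2 * (N div p ^ i))"
    by (intro sum_mono double_div_le)
  also have "\<dots> = card ({1..B} \<inter> {i. p ^ i \<le> 2 * N}) + 2 * (\<Sum>i=1..B. N div p ^ i)"
    by (simp add: sum.distrib sum.If_cases sum_distrib_left)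
  finally have mult_le: "multiplicity p C \<le> card ({1..B} \<inter> {i. p ^ i \<le> 2 * N})"
    using eq by linarith
  show ?thesis
  proof (rule ccontr)
    assume "\<not> ?thesis"
    hence big: "2 * N < p ^ multiplicity p C" by (simp add: C_def)
    have "{1..B} \<inter> {i. p ^ i \<le> 2 * N} \<subseteq> {1..<multiplicity p C}"
    proof
      fix i assume "i \<in> {1..B} \<inter> {i. p ^ i \<le> 2 * N}"
      hence "1 \<le> i" "p ^ i < p ^ multiplicity p C" using big by auto
      thus "i \<in> {1..<multiplicity p C}" using p2 power_less_imp_less_exp by auto
    qed
    hence "card ({1..B} \<inter> {i. p ^ i \<le> 2 * N}) \<le> multiplicity p C - 1"
      using card_mono[of "{1..<multiplicity p C}"] by fastforce
    moreover have "1 \<le> multiplicity p C" using big N by (cases "multiplicity p C") auto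
    ultimately show False using mult_le by linarith
  qed
qed

lemma central_binomial_le_power_prime_counting:
  fixes N :: nat
  assumes N: "0 < N"
  shows "(2 * N) choose N \<le> (2 * N) ^ prime_counting (2 * N)"
proof -
  define C where "C = (2 * N) choose N"
  have C0: "0 < C" by (simp add: C_def)
  have "C dvd fact (2 * N)"
    unfolding C_def using binomial_fact_lemma[of N "2 * N"] by (metis dvd_triv_right le_add2 mult_2)
  hence factors: "prime_factors C \<subseteq> {q. prime q \<and> q \<le> 2 * N}"
    by (auto simp: in_prime_factors_iff intro: prime_dvd_fact_iff[THEN iffD1] dvd_trans)
  have "C = (\<Prod>p \<in> prime_factors C. p ^ multiplicity p C)"
    by (rule prime_factorization_nat[OF C0])
  also have "\<dots> \<le> (\<Prod>p \<in> prime_factors C. 2 * N)"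
    using N by (intro prod_mono)
      (auto simp: C_def in_prime_factors_iff prime_power_multiplicity_central_binomial_le)
  also have "\<dots> = (2 * N) ^ card (prime_factors C)" by simp
  also have "\<dots> \<le> (2 * N) ^ prime_counting (2 * N)"
    unfolding prime_counting_def using N factors by (intro power_increasing card_mono) auto
  finally show ?thesis by (simp add: C_def)
qed

lemma power_two_le_prime_counting: "2 ^ j \<le> (j + 1) * prime_counting (2 ^ (j + 1))"
proof -
  define N :: nat where "N = 2 ^ j"
  have N: "0 < N" by (simp add: N_def)
  have "(2 / 1 :: real) ^ N \<le> real ((2 * N) choose N)"
    using binomial_ge_n_over_k_pow_k[of N "2 * N", where 'a=real] N by simp
  hence "(2::nat) ^ N \<le> (2 * N) choose N"
    by (metis div_by_1 of_nat_le_iff of_nat_numeral of_nat_power)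
  also have "\<dots> \<le> (2 * N) ^ prime_counting (2 * N)"
    using central_binomial_le_power_prime_counting[OF N] .
  also have "\<dots> = (2 ^ (j + 1)) ^ prime_counting (2 ^ (j + 1))"
    by (simp add: N_def)
  also have "\<dots> = 2 ^ ((j + 1) * prime_counting (2 ^ (j + 1)))"
    by (rule power_mult[symmetric])
  finally show ?thesis by (simp add: N_def)
qed

lemma ex_power_of_two_between:
  fixes k :: nat
  assumes "1 \<le> k"
  obtains T where "1 \<le> T" "k < 2 ^ T" "2 ^ T \<le> 2 * k"
proof -
  obtain t where "2 ^ t \<le> k" "k < 2 ^ (t + 1)"
    using ex_power_ivl1[of 2 k] assms by auto
  thus ?thesis using that[of "t + 1"] by auto
qed

lemma le_if_few_smaller_primes:
  fixes p m X :: nat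
  assumes "card {q. prime q \<and> q < p} < m" and "m \<le> prime_counting X"
  shows "p \<le> X"
proof (rule ccontr)
  assume "\<not> p \<le> X"
  hence "{q. prime q \<and> q \<le> X} \<subseteq> {q. prime q \<and> q < p}" by auto
  hence "prime_counting X \<le> card {q. prime q \<and> q < p}"
    unfolding prime_counting_def by (intro card_mono) auto
  thus False using assms by linarith
qed

lemma prime_le_if_few_smaller_primes:
  fixes p m :: nat
  assumes few: "card {q. prime q \<and> q < p} < m"
  shows "real p \<le> 16 * (real m + 1) * (log 2 (2 * (real m + 1)) + 1)"
proof -
  obtain T where T: "1 \<le> T" "m + 1 < 2 ^ T" "2 ^ T \<le> 2 * (m + 1)"
    using ex_power_of_two_between[of "m + 1"] by auto
  obtain s where s: "1 \<le> s" "2 * (T + 1) < 2 ^ s" "2 ^ s \<le> 2 * (2 * (T + 1))"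
    using ex_power_of_two_between[of "2 * (T + 1)"] by auto
  have Ts: "T + s + 1 \<le> 2 ^ s"
  proof -
    obtain s' where s': "s = Suc s'" using s(1) by (cases s) auto
    have "s' < 2 ^ s'" by (rule less_exp)
    moreover have "T + 1 < 2 ^ s'" using s(2) s' by simp
    moreover have "(2::nat) ^ s = 2 * 2 ^ s'" using s' by simp
    ultimately show ?thesis using s' by linarith
  qed
  define X :: nat where "X = 2 ^ (T + s + 1)"
  have "(m + 1) * (T + s + 1) \<le> 2 ^ T * 2 ^ s"
    using T(2) Ts by (intro mult_le_mono) auto
  also have "\<dots> \<le> (T + s + 1) * prime_counting X"
    using power_two_le_prime_counting[of "T + s"] by (simp add: X_def power_add)
  finally have "(T + s + 1) * (m + 1) \<le> (T + s + 1) * prime_counting X"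
    by (simp only: mult.commute)
  hence "m + 1 \<le> prime_counting X"
    by (simp only: mult_le_cancel1)
  hence "p \<le> X"
    using few by (intro le_if_few_smaller_primes[of p "m + 1"]) auto
  have "X = 2 * 2 ^ T * 2 ^ s" by (simp add: X_def power_add)
  also have "\<dots> \<le> 2 * (2 * (m + 1)) * (4 * (T + 1))"
    using T(3) s(3) by (intro mult_le_mono) auto
  finally have "X \<le> 16 * (m + 1) * (T + 1)" by (simp add: algebra_simps)
  hence "real X \<le> 16 * (real m + 1) * (real T + 1)"
    using of_nat_mono[of X "16 * (m + 1) * (T + 1)", where 'a=real] by (simp add: algebra_simps)
  moreover have "real T \<le> log 2 (2 * (real m + 1))"
  proof (rule le_log_of_power)
    have "real (2 ^ T) \<le> real (2 * (m + 1))" using T(3) by (rule of_nat_mono)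
    thus "2 ^ T \<le> 2 * (real m + 1)" by simp
  qed simp
  hence "16 * (real m + 1) * (real T + 1) \<le> 16 * (real m + 1) * (log 2 (2 * (real m + 1)) + 1)"
    by (intro mult_left_mono) auto
  ultimately show ?thesis using \<open>p \<le> X\<close> by linarith
qed

section \<open>The first primes and the separating constant\<close>

lemma finite_primes_with_few_smaller_primes:
  "finite {p::nat. prime p \<and> card {q. prime q \<and> q < p} < m}"
proof (rule finite_subset)
  show "{p::nat. prime p \<and> card {q. prime q \<and> q < p} < m}
      \<subseteq> {..nat \<lfloor>16 * (real m + 1) * (log 2 (2 * (real m + 1)) + 1)\<rfloor>}"
  proof
    fix p :: nat
    assume "p \<in> {p. prime p \<and> card {q. prime q \<and> q < p} < m}"
    thus "p \<in> {..nat \<lfloor>16 * (real m + 1) * (log 2 (2 * (real m + 1)) + 1)\<rfloor>}"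
      using le_nat_floor[OF prime_le_if_few_smaller_primes] by simp
  qed
qed simp

lemma set_first_primes:
  "set (first_primes m) = {p. prime p \<and> card {q. prime q \<and> q < p} < m}"
  unfolding first_primes_def using finite_primes_with_few_smaller_primes by simp

lemma distinct_first_primes: "distinct (first_primes m)"
  by (simp add: first_primes_def)

lemma first_primes_le:
  "p \<in> set (first_primes m) \<Longrightarrow> real p \<le> 16 * (real m + 1) * (log 2 (2 * (real m + 1)) + 1)"
  using prime_le_if_few_smaller_primes by (simp add: set_first_primes)

lemma first_primes_mono: "m \<le> m' \<Longrightarrow> set (first_primes m) \<subseteq> set (first_primes m')"
  unfolding set_first_primes by auto

lemma ln_ge_one: "3 \<le> x \<Longrightarrow> 1 \<le> ln x" for x :: real
  using exp_le ln_ge_iff[of x 1] by simp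

lemma one_less_ln_four: "1 < ln (4::real)"
proof -
  have "ln (3::real) < ln 4" by simp
  thus ?thesis using ln_ge_one[of 3] by linarith
qed

lemma ln_ln_four_pos: "0 < ln (ln (4::real))"
  using one_less_ln_four by simp

lemma logratio_nonneg: "0 \<le> logratio n"
  using ln_ge_one[of "real n"] by (simp add: logratio_def)

lemma logratio_le: "logratio n \<le> max 1 (logratio 3) + ln (real n) / ln (ln 4)"
proof (cases "n \<le> 3")
  case True
  hence "logratio n \<le> max 1 (logratio 3)"
    by (cases "n = 3") (auto simp: logratio_def)
  moreover have "0 \<le> ln (real n) / ln (ln 4)"
    using ln_ln_four_pos by (cases "n = 0") auto
  ultimately show ?thesis by linarith
next
  case False
  have ln4_le: "ln (4::real) \<le> ln (real n)" using False by simp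
  hence "ln (ln 4) \<le> ln (ln (real n))" using one_less_ln_four by simp
  with ln_ln_four_pos have "ln (real n) / ln (ln (real n)) \<le> ln (real n) / ln (ln 4)"
    using one_less_ln_four ln4_le by (intro divide_left_mono mult_pos_pos) auto
  thus ?thesis using False by (simp add: logratio_def)
qed

lemma num_primes_mono: "0 \<le> c \<Longrightarrow> l \<le> k \<Longrightarrow> num_primes c l n \<le> num_primes c k n"
  unfolding num_primes_def
  by (intro nat_mono ceiling_mono mult_right_mono mult_left_mono logratio_nonneg) auto

lemma separating_const_pos: "separating_const c \<Longrightarrow> 0 < c"
proof (rule ccontr)
  assume sep: "separating_const c" and "\<not> 0 < c"
  hence "num_primes c 1 1 = 0" by (simp add: num_primes_def logratio_def)
  moreover have "set (first_primes (num_primes c 1 1)) \<noteq> {}"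
    using sep[unfolded separating_const_def, rule_format, where n=1 and l=1 and P="{1}" and i=1] by auto
  ultimately show False by (simp add: set_first_primes)
qed

lemma separating_prime:
  assumes sep: "separating_const c" and P: "P \<subseteq> {1..n}" "card P \<le> k" and j: "j \<in> P"
  obtains p where "p \<in> set (first_primes (num_primes c k n))" "0 < p"
    and "\<forall>j' \<in> P - {j}. j mod p \<noteq> j' mod p"
proof -
  obtain p where p: "p \<in> set (first_primes (num_primes c (card P) n))"
    and sep_p: "\<forall>j' \<in> P - {j}. j mod p \<noteq> j' mod p"
    using sep[unfolded separating_const_def, rule_format, where n=n and l="card P" and P=P and i=j] P j by blast
  have "num_primes c (card P) n \<le> num_primes c k n"
    using num_primes_mono separating_const_pos[OF sep] P(2) by simp
  hence "p \<in> set (first_primes (num_primes c k n))"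
    using first_primes_mono p by blast
  moreover have "0 < p" using p by (simp add: set_first_primes prime_gt_0_nat)
  ultimately show ?thesis using that sep_p by blast
qed

section \<open>Strips and detected rows\<close>

lemma fold_invariant_cost_le:
  fixes f :: "'x \<Rightarrow> 'y \<times> nat \<Rightarrow> 'y \<times> nat"
  assumes step: "\<And>x s. x \<in> set xs \<Longrightarrow> P s \<Longrightarrow> P (f x s) \<and> snd (f x s) \<le> snd s + g x"
    and "P s"
  shows "P (fold f xs s) \<and> snd (fold f xs s) \<le> snd s + sum_list (map g xs)"
  using assms
proof (induction xs arbitrary: s)
  case (Cons x xs)
  have "P (f x s)" "snd (f x s) \<le> snd s + g x"
    using Cons.prems by auto
  moreover have "P (fold f xs (f x s))
      \<and> snd (fold f xs (f x s)) \<le> snd (f x s) + sum_list (map g xs)"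
    using Cons.IH Cons.prems calculation(1) by auto
  ultimately show ?case by simp
qed simp

lemma fold_subset_le:
  assumes "\<And>x s. x \<in> set xs \<Longrightarrow> h (f x s) \<subseteq> h s"
  shows "h (fold f xs s) \<subseteq> h s"
  using assms
proof (induction xs arbitrary: s)
  case (Cons x xs)
  have "h (fold f xs (f x s)) \<subseteq> h (f x s)" using Cons by simp
  also have "\<dots> \<subseteq> h s" using Cons.prems by simp
  finally show ?case by simp
qed simp

definition wrong_entries :: "nat \<Rightarrow> 'a::ring_1 matrix \<Rightarrow> 'a matrix \<Rightarrow> 'a matrix \<Rightarrow> (nat \<times> nat) set"
  where "wrong_entries n A B Cs = {(i, j). i \<in> {1..n} \<and> j \<in> {1..n} \<and> Cs i j \<noteq> matprod n A B i j}"

lemma finite_wrong_entries: "finite (wrong_entries n A B Cs)"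
  by (rule finite_subset[of _ "{1..n} \<times> {1..n}"]) (auto simp: wrong_entries_def)

lemma card_wrong_entries: "card (wrong_entries n A B C') = num_errors n A B C'"
  by (simp add: wrong_entries_def num_errors_def)

definition strip :: "nat \<Rightarrow> nat \<Rightarrow> nat \<Rightarrow> nat set" where
  "strip n p r = {j \<in> {1..n}. j mod p = r}"

definition detected_rows :: "nat \<Rightarrow> 'a::ring_1 matrix \<Rightarrow> 'a matrix \<Rightarrow> nat \<Rightarrow> nat \<Rightarrow> 'a matrix \<Rightarrow> nat set"
  where "detected_rows n A B p r Cs = {i \<in> {1..n}.
    mat_vec n A (mat_vec n B (\<lambda>j. if j \<in> strip n p r then 1 else 0)) i
      \<noteq> mat_vec n Cs (\<lambda>j. if j \<in> strip n p r then 1 else 0) i}"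

lemma strip_step_eq:
  "strip_step n A B p r (Cs, t) =
     ((\<lambda>i j. if i \<in> detected_rows n A B p r Cs \<and> j \<in> strip n p r then matprod n A B i j else Cs i j),
      t + 6 * n * n + 2 * n + card (detected_rows n A B p r Cs) * card (strip n p r) * (2 * n + 1))"
  by (simp add: strip_step_def Let_def detected_rows_def strip_def)

lemma mat_vec_mat_vec: "mat_vec n A (mat_vec n B v) = mat_vec n (matprod n A B) v"
proof
  fix i
  have "mat_vec n A (mat_vec n B v) i = (\<Sum>l=1..n. \<Sum>m=1..n. A i l * B l m * v m)"
    by (simp add: mat_vec_def sum_distrib_left mult.assoc)
  also have "\<dots> = (\<Sum>m=1..n. \<Sum>l=1..n. A i l * B l m * v m)"
    by (rule sum.swap)
  also have "\<dots> = mat_vec n (matprod n A B) v i"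
    by (simp add: mat_vec_def matprod_def sum_distrib_right)
  finally show "mat_vec n A (mat_vec n B v) i = mat_vec n (matprod n A B) v i" .
qed

lemma detected_rows_iff:
  "i \<in> detected_rows n A B p r Cs
     \<longleftrightarrow> i \<in> {1..n} \<and> (\<Sum>j \<in> strip n p r. matprod n A B i j - Cs i j) \<noteq> 0"
proof -
  have "mat_vec n (matprod n A B) (\<lambda>j. if j \<in> strip n p r then 1 else 0) i
      - mat_vec n Cs (\<lambda>j. if j \<in> strip n p r then 1 else 0) i
      = (\<Sum>j=1..n. if j mod p = r then matprod n A B i j - Cs i j else 0)"
    by (simp add: mat_vec_def strip_def sum_subtractf[symmetric] if_distrib cong: if_cong)
  also have "\<dots> = (\<Sum>j \<in> strip n p r. matprod n A B i j - Cs i j)"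
    unfolding strip_def by (rule sum.inter_filter[symmetric]) simp
  finally show ?thesis
    by (auto simp: detected_rows_def mat_vec_mat_vec)
qed

lemma detected_rows_subset:
  "detected_rows n A B p r Cs \<subseteq> fst ` {e \<in> wrong_entries n A B Cs. snd e mod p = r}"
proof
  fix i assume "i \<in> detected_rows n A B p r Cs"
  hence i: "i \<in> {1..n}" and "(\<Sum>j \<in> strip n p r. matprod n A B i j - Cs i j) \<noteq> 0"
    by (simp_all add: detected_rows_iff)
  then obtain j where "j \<in> strip n p r" "matprod n A B i j - Cs i j \<noteq> 0"
    using sum.not_neutral_contains_not_neutral by blast
  hence "(i, j) \<in> {e \<in> wrong_entries n A B Cs. snd e mod p = r}"
    using i by (auto simp: strip_def wrong_entries_def)
  thus "i \<in> fst ` {e \<in> wrong_entries n A B Cs. snd e mod p = r}"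
    by force
qed

lemma lone_error_detected:
  assumes ij: "(i, j) \<in> wrong_entries n A B Cs"
    and lone: "\<And>j'. (i, j') \<in> wrong_entries n A B Cs \<Longrightarrow> j' mod p = j mod p \<Longrightarrow> j' = j"
  shows "i \<in> detected_rows n A B p (j mod p) Cs"
proof -
  have i: "i \<in> {1..n}" and j: "j \<in> strip n p (j mod p)"
    and err: "matprod n A B i j - Cs i j \<noteq> 0"
    using ij by (auto simp: wrong_entries_def strip_def)
  have "(\<Sum>l \<in> {j}. matprod n A B i l - Cs i l)
      = (\<Sum>l \<in> strip n p (j mod p). matprod n A B i l - Cs i l)"
  proof (rule sum.mono_neutral_left)
    show "finite (strip n p (j mod p))" by (simp add: strip_def)
    show "{j} \<subseteq> strip n p (j mod p)" using j by simp
    show "\<forall>l \<in> strip n p (j mod p) - {j}. matprod n A B i l - Cs i l = 0"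
      using i lone by (auto simp: strip_def wrong_entries_def)
  qed
  thus ?thesis using i err by (simp add: detected_rows_iff)
qed

lemma wrong_entries_strip_step_subset:
  "wrong_entries n A B (fst (strip_step n A B p r s)) \<subseteq> wrong_entries n A B (fst s)"
  by (cases s) (auto simp: strip_step_eq wrong_entries_def split: if_splits)

lemma strip_step_corrects_lone_error:
  assumes "(i, j) \<in> wrong_entries n A B Cs"
    and "\<And>j'. (i, j') \<in> wrong_entries n A B Cs \<Longrightarrow> j' mod p = j mod p \<Longrightarrow> j' = j"
  shows "(i, j) \<notin> wrong_entries n A B (fst (strip_step n A B p (j mod p) (Cs, t)))"
  using lone_error_detected[OF assms] assms(1)
  by (auto simp: strip_step_eq wrong_entries_def strip_def)

lemma wrong_entries_fold_strip_step_subset: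
  "wrong_entries n A B (fst (fold (strip_step n A B p) rs s)) \<subseteq> wrong_entries n A B (fst s)"
  by (rule fold_subset_le[where h = "\<lambda>s. wrong_entries n A B (fst s)",
        OF wrong_entries_strip_step_subset])

lemma strip_step_cost_le:
  assumes "wrong_entries n A B Cs \<subseteq> E" and "finite E"
  shows "snd (strip_step n A B p r (Cs, t))
    \<le> t + (6 * n * n + 2 * n + card {e \<in> E. snd e mod p = r} * (n * (2 * n + 1)))"
proof -
  have "card (detected_rows n A B p r Cs) \<le> card (fst ` {e \<in> wrong_entries n A B Cs. snd e mod p = r})"
    by (intro card_mono detected_rows_subset) (simp add: finite_wrong_entries)
  also have "\<dots> \<le> card {e \<in> wrong_entries n A B Cs. snd e mod p = r}"
    by (intro card_image_le) (simp add: finite_wrong_entries)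
  also have "\<dots> \<le> card {e \<in> E. snd e mod p = r}"
    using assms by (intro card_mono) auto
  finally have "card (detected_rows n A B p r Cs) \<le> card {e \<in> E. snd e mod p = r}" .
  moreover have "card (strip n p r) \<le> card {1..n}"
    by (rule card_mono) (auto simp: strip_def)
  ultimately have "card (detected_rows n A B p r Cs) * card (strip n p r) * (2 * n + 1)
      \<le> card {e \<in> E. snd e mod p = r} * n * (2 * n + 1)"
    by (intro mult_le_mono) auto
  hence "card (detected_rows n A B p r Cs) * card (strip n p r) * (2 * n + 1)
      \<le> card {e \<in> E. snd e mod p = r} * (n * (2 * n + 1))"
    by (simp only: mult.assoc)
  thus ?thesis unfolding strip_step_eq snd_conv by linarith
qed

lemma sum_card_residue_classes_le:
  fixes E :: "('b \<times> nat) set"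
  assumes "finite E"
  shows "(\<Sum>r<p. card {e \<in> E. snd e mod p = r}) \<le> card E"
proof -
  have "(\<Sum>r<p. card {e \<in> E. snd e mod p = r}) = card (\<Union>r<p. {e \<in> E. snd e mod p = r})"
    using assms by (intro card_UN_disjoint[symmetric]) auto
  also have "\<dots> \<le> card E"
    using assms by (intro card_mono) auto
  finally show ?thesis .
qed

lemma prime_step_eq:
  "prime_step n A B p (Cs, t) = fold (strip_step n A B p) [0..<p] (Cs, t + 2 * n * n + n)"
  by (simp add: prime_step_def)

lemma prime_step_invariant_cost_le:
  assumes "wrong_entries n A B Cs \<subseteq> E" and "finite E"
  shows "wrong_entries n A B (fst (prime_step n A B p (Cs, t))) \<subseteq> E
    \<and> snd (prime_step n A B p (Cs, t))
        \<le> t + (2 * n * n + n + p * (6 * n * n + 2 * n) + card E * (n * (2 * n + 1)))"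
proof -
  define g where "g r = 6 * n * n + 2 * n + card {e \<in> E. snd e mod p = r} * (n * (2 * n + 1))" for r
  have fold: "wrong_entries n A B (fst (fold (strip_step n A B p) [0..<p] (Cs, t + 2 * n * n + n))) \<subseteq> E
     \<and> snd (fold (strip_step n A B p) [0..<p] (Cs, t + 2 * n * n + n))
        \<le> snd (Cs, t + 2 * n * n + n) + sum_list (map g [0..<p])"
  proof (rule fold_invariant_cost_le[where P = "\<lambda>s. wrong_entries n A B (fst s) \<subseteq> E"])
    fix r and s :: "'a matrix \<times> nat"
    assume s: "wrong_entries n A B (fst s) \<subseteq> E"
    obtain C1 t1 where s_eq: "s = (C1, t1)" by (cases s)
    have "snd (strip_step n A B p r (C1, t1)) \<le> t1 + g r"
      unfolding g_def using s s_eq assms(2) by (intro strip_step_cost_le) simp_all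
    thus "wrong_entries n A B (fst (strip_step n A B p r s)) \<subseteq> E
        \<and> snd (strip_step n A B p r s) \<le> snd s + g r"
      using subset_trans[OF wrong_entries_strip_step_subset s] by (simp add: s_eq)
  qed (use assms in simp)
  have sum_eq: "sum_list (map g [0..<p]) = p * (6 * n * n + 2 * n)
      + (\<Sum>r<p. card {e \<in> E. snd e mod p = r}) * (n * (2 * n + 1))"
    by (simp add: sum_list_distinct_conv_sum_set atLeast0LessThan g_def sum.distrib
        sum_distrib_right)
  have residues: "(\<Sum>r<p. card {e \<in> E. snd e mod p = r}) * (n * (2 * n + 1))
      \<le> card E * (n * (2 * n + 1))"
    using sum_card_residue_classes_le[OF assms(2)] by (rule mult_le_mono1)
  have "snd (fold (strip_step n A B p) [0..<p] (Cs, t + 2 * n * n + n))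
      \<le> t + 2 * n * n + n + (p * (6 * n * n + 2 * n)
        + (\<Sum>r<p. card {e \<in> E. snd e mod p = r}) * (n * (2 * n + 1)))"
    using conjunct2[OF fold] unfolding sum_eq by simp
  also have "\<dots> \<le> t + 2 * n * n + n + (p * (6 * n * n + 2 * n) + card E * (n * (2 * n + 1)))"
    using residues by (intro add_left_mono)
  finally show ?thesis
    unfolding prime_step_eq using conjunct1[OF fold] by (simp add: ac_simps)
qed

lemma wrong_entries_prime_step_subset:
  "wrong_entries n A B (fst (prime_step n A B p s)) \<subseteq> wrong_entries n A B (fst s)"
  using conjunct1[OF prime_step_invariant_cost_le[OF subset_refl finite_wrong_entries]]
  by (cases s) simp

lemma prime_step_corrects_separated_error:
  assumes E: "wrong_entries n A B Cs \<subseteq> E" and p: "0 < p" and ij: "(i, j) \<in> E"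
    and separated: "\<And>j'. (i, j') \<in> E \<Longrightarrow> j' \<noteq> j \<Longrightarrow> j mod p \<noteq> j' mod p"
  shows "(i, j) \<notin> wrong_entries n A B (fst (prime_step n A B p (Cs, t)))"
proof -
  define r where "r = j mod p"
  have "r \<in> set [0..<p]" using p by (simp add: r_def)
  then obtain xs ys where split: "[0..<p] = xs @ r # ys"
    by (blast dest: split_list)
  define s where "s = fold (strip_step n A B p) xs (Cs, t + 2 * n * n + n)"
  have s: "wrong_entries n A B (fst s) \<subseteq> E"
    using wrong_entries_fold_strip_step_subset[of n A B p xs "(Cs, t + 2 * n * n + n)"] E
    by (simp add: s_def)
  have "(i, j) \<notin> wrong_entries n A B (fst (strip_step n A B p r s))"
  proof (cases "(i, j) \<in> wrong_entries n A B (fst s)")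
    case True
    have "(i, j) \<notin> wrong_entries n A B (fst (strip_step n A B p (j mod p) (fst s, snd s)))"
      using True by (rule strip_step_corrects_lone_error) (metis s separated subsetD)
    thus ?thesis by (simp add: r_def)
  next
    case False
    thus ?thesis
      using wrong_entries_strip_step_subset[of n A B p r s] by blast
  qed
  moreover note wrong_entries_fold_strip_step_subset[of n A B p ys "strip_step n A B p r s"]
  moreover have "prime_step n A B p (Cs, t) = fold (strip_step n A B p) ys (strip_step n A B p r s)"
    by (simp only: prime_step_eq split fold_append comp_def s_def fold.simps(2))
  ultimately show ?thesis by (metis subsetD)
qed

section \<open>Correctness and running time of Algorithm 1\<close>

lemma algorithm1_eq:
  "algorithm1 c n k A B C' =
     (fst (fold (prime_step n A B) (first_primes (num_primes c k n))
            (C', primes_cost (first_primes (num_primes c k n)))),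
      snd (fold (prime_step n A B) (first_primes (num_primes c k n))
            (C', primes_cost (first_primes (num_primes c k n)))) + n * n)"
  by (simp add: algorithm1_def Let_def split_beta)

lemma wrong_entries_fold_prime_step_subset:
  "wrong_entries n A B (fst (fold (prime_step n A B) L s)) \<subseteq> wrong_entries n A B (fst s)"
  by (rule fold_subset_le[where h = "\<lambda>s. wrong_entries n A B (fst s)",
        OF wrong_entries_prime_step_subset])

lemma card_row_le_card:
  assumes "finite E"
  shows "card {j. (i, j) \<in> E} \<le> card E"
proof -
  have "card {j. (i, j) \<in> E} = card (Pair i ` {j. (i, j) \<in> E})"
    by (simp add: card_image inj_on_def)
  also have "\<dots> \<le> card E"
    using assms by (intro card_mono) auto
  finally show ?thesis .
qed

lemma algorithm1_correct:
  assumes sep: "separating_const c" and errs: "num_errors n A B C' \<le> k"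
  shows "(i, j) \<notin> wrong_entries n A B (fst (algorithm1 c n k A B C'))"
proof -
  define L where "L = first_primes (num_primes c k n)"
  define E where "E = wrong_entries n A B C'"
  define R where "R = fold (prime_step n A B) L (C', primes_cost L)"
  have R_E: "wrong_entries n A B (fst R) \<subseteq> E"
    using wrong_entries_fold_prime_step_subset[of n A B L "(C', primes_cost L)"]
    by (simp add: R_def E_def)
  have "(i, j) \<notin> wrong_entries n A B (fst R)"
  proof
    assume ij_R: "(i, j) \<in> wrong_entries n A B (fst R)"
    hence ij: "(i, j) \<in> E" using R_E by blast
    define P where "P = {j'. (i, j') \<in> E}"
    have "P \<subseteq> {1..n}" by (auto simp: P_def E_def wrong_entries_def)
    moreover have "card P \<le> k"
      unfolding P_def E_def
      using le_trans[OF card_row_le_card[OF finite_wrong_entries] errs[folded card_wrong_entries]] .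
    moreover have "j \<in> P" using ij by (simp add: P_def)
    ultimately obtain p where p: "p \<in> set L" "0 < p" and separated: "\<forall>j' \<in> P - {j}. j mod p \<noteq> j' mod p"
      using separating_prime[OF sep] unfolding L_def by metis
    obtain L1 L2 where L: "L = L1 @ p # L2"
      using p(1) by (blast dest: split_list)
    define R1 where "R1 = fold (prime_step n A B) L1 (C', primes_cost L)"
    have "wrong_entries n A B (fst R1) \<subseteq> E"
      using wrong_entries_fold_prime_step_subset[of n A B L1 "(C', primes_cost L)"]
      by (simp add: R1_def E_def)
    hence "(i, j) \<notin> wrong_entries n A B (fst (prime_step n A B p (fst R1, snd R1)))"
      using p(2) ij separated by (intro prime_step_corrects_separated_error) (auto simp: P_def)
    moreover have "R = fold (prime_step n A B) L2 (prime_step n A B p R1)"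
      by (simp add: R_def R1_def L)
    ultimately show False
      using ij_R wrong_entries_fold_prime_step_subset[of n A B L2 "prime_step n A B p R1"] by auto
  qed
  thus ?thesis by (simp add: algorithm1_eq R_def L_def)
qed

text \<open>Generating the primes costs at most \<open>(X + 2)\<^sup>2\<close>. Each of the at most \<open>X + 1\<close> primes
  costs \<open>2n\<^sup>2 + n\<close> for permuting columns and \<open>6n\<^sup>2 + 2n\<close> for each of its at most \<open>X\<close>
  strips, and recomputing a detected row of a strip costs \<open>(2n + 1) n\<close>, with at most \<open>k\<close>
  detected rows per prime. Restoring the column order costs \<open>n\<^sup>2\<close>.\<close>
definition algorithm1_cost_bound :: "nat \<Rightarrow> nat \<Rightarrow> nat \<Rightarrow> nat" where
  "algorithm1_cost_bound X n k =
     (X + 2)\<^sup>2 + (X + 1) * (2 * n * n + n + X * (6 * n * n + 2 * n) + k * (n * (2 * n + 1))) + n * n"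

lemma algorithm1_cost_le:
  assumes errs: "num_errors n A B C' \<le> k"
    and X: "\<forall>p \<in> set (first_primes (num_primes c k n)). p \<le> X"
  shows "snd (algorithm1 c n k A B C') \<le> algorithm1_cost_bound X n k"
proof -
  define L where "L = first_primes (num_primes c k n)"
  define E where "E = wrong_entries n A B C'"
  define g where "g p = 2 * n * n + n + p * (6 * n * n + 2 * n) + card E * (n * (2 * n + 1))" for p
  have "wrong_entries n A B (fst (fold (prime_step n A B) L (C', primes_cost L))) \<subseteq> E
    \<and> snd (fold (prime_step n A B) L (C', primes_cost L)) \<le> snd (C', primes_cost L) + sum_list (map g L)"
  proof (rule fold_invariant_cost_le[where P = "\<lambda>s. wrong_entries n A B (fst s) \<subseteq> E"])
    fix p and s :: "'a matrix \<times> nat"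
    assume "wrong_entries n A B (fst s) \<subseteq> E"
    hence "wrong_entries n A B (fst (prime_step n A B p (fst s, snd s))) \<subseteq> E
        \<and> snd (prime_step n A B p (fst s, snd s)) \<le> snd s + g p"
      unfolding g_def E_def by (intro prime_step_invariant_cost_le finite_wrong_entries)
    thus "wrong_entries n A B (fst (prime_step n A B p s)) \<subseteq> E
        \<and> snd (prime_step n A B p s) \<le> snd s + g p"
      by simp
  qed (simp add: E_def)
  hence fold_cost: "snd (fold (prime_step n A B) L (C', primes_cost L)) \<le> primes_cost L + sum_list (map g L)"
    by simp
  have L_le: "\<forall>p \<in> set L. p \<le> X" using X by (simp add: L_def)
  have "sum_list (map g L) = sum g (set L)"
    by (simp add: sum_list_distinct_conv_sum_set L_def distinct_first_primes)
  also have "\<dots> \<le> card (set L) * g X"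
    using L_le sum_bounded_above[of "set L" g "g X"] by (force simp: g_def intro: mult_right_mono)
  also have "\<dots> \<le> (X + 1) * (2 * n * n + n + X * (6 * n * n + 2 * n) + k * (n * (2 * n + 1)))"
  proof (rule mult_le_mono)
    show "card (set L) \<le> X + 1"
      using card_mono[of "{..X}" "set L"] L_le by fastforce
    show "g X \<le> 2 * n * n + n + X * (6 * n * n + 2 * n) + k * (n * (2 * n + 1))"
      using errs unfolding g_def by (simp add: E_def card_wrong_entries)
  qed
  finally have sum_le: "sum_list (map g L) \<le> (X + 1) * (2 * n * n + n + X * (6 * n * n + 2 * n) + k * (n * (2 * n + 1)))" .
  have "primes_cost L \<le> (X + 2)\<^sup>2"
    unfolding primes_cost_def using L_le by (intro power_mono) (auto simp: Max_le_iff)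
  thus ?thesis
    using fold_cost sum_le unfolding algorithm1_eq algorithm1_cost_bound_def L_def by simp
qed

lemma num_primes_polylog_bound:
  assumes c: "0 < c"
  obtains A where "2 \<le> A"
    and "\<And>n k. real (num_primes c k n) + 1 \<le> A * (real (max 1 k) * ln (real (n + k) + 3))"
proof
  define L where "L = max 1 (logratio 3) + 1 / ln (ln 4)"
  have L: "0 \<le> L" using ln_ln_four_pos by (simp add: L_def)
  show "2 \<le> c * L + 2" using c L by simp
  fix n k
  define a where "a = real (max 1 k)"
  define l where "l = ln (real (n + k) + 3)"
  have a: "real k \<le> a" "1 \<le> a" and l: "1 \<le> l"
    using ln_ge_one by (auto simp: a_def l_def)
  have "ln (real n) \<le> l"
    using l by (cases "n = 0") (auto simp: l_def)
  hence "ln (real n) / ln (ln 4) \<le> l / ln (ln 4)"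
    using ln_ln_four_pos by (intro divide_right_mono) auto
  moreover have "max 1 (logratio 3) \<le> max 1 (logratio 3) * l"
    using mult_left_mono[OF l, of "max 1 (logratio 3)"] by simp
  ultimately have "logratio n \<le> max 1 (logratio 3) * l + l / ln (ln 4)"
    using logratio_le[of n] by linarith
  hence lr: "logratio n \<le> L * l"
    by (simp add: L_def algebra_simps)
  have "real (num_primes c k n) \<le> c * real k * logratio n + 1"
    using c logratio_nonneg[of n] by (simp add: num_primes_def)
  also have "\<dots> \<le> c * a * (L * l) + 1"
    using c a lr logratio_nonneg[of n] by (intro add_right_mono mult_mono) auto
  finally have "real (num_primes c k n) + 1 \<le> c * L * (a * l) + 2"
    by (simp add: algebra_simps)
  also have "\<dots> \<le> (c * L + 2) * (a * l)"
    using mult_mono[OF a(2) l] a by (simp add: algebra_simps)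
  finally show "real (num_primes c k n) + 1 \<le> (c * L + 2) * (real (max 1 k) * ln (real (n + k) + 3))"
    by (simp add: a_def l_def)
qed

lemma log_two_le_linear:
  fixes A a l :: real
  assumes A: "2 \<le> A" and a: "1 \<le> a" and l: "1 \<le> l" "ln a \<le> l"
  shows "log 2 (2 * (A * (a * l))) + 1 \<le> (log 2 (2 * A) + 2 / ln 2 + 1) * l"
proof -
  have "log 2 (2 * (A * (a * l))) = log 2 (2 * A) + ln a / ln 2 + ln l / ln 2"
    using A a l by (simp add: log_def ln_mult add_divide_distrib)
  also have "\<dots> \<le> log 2 (2 * A) * l + l / ln 2 + l / ln 2"
  proof -
    have "0 \<le> log 2 (2 * A)" using A by simp
    hence "log 2 (2 * A) \<le> log 2 (2 * A) * l" using l by (simp add: mult_le_cancel_left1)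
    moreover have "ln a / ln 2 \<le> l / ln 2" "ln l / ln 2 \<le> l / ln 2"
      using l ln_bound[of l] by (auto intro: divide_right_mono)
    ultimately show ?thesis by linarith
  qed
  finally show ?thesis using l by (simp add: algebra_simps)
qed

lemma first_primes_polylog_bound:
  assumes "0 < c"
  obtains C where "0 \<le> C"
    and "\<And>n k p. p \<in> set (first_primes (num_primes c k n))
           \<Longrightarrow> real p \<le> C * real (max 1 k) * ln (real (n + k) + 3) ^ 2"
proof -
  obtain A where A: "2 \<le> A"
    and m_le: "\<And>n k. real (num_primes c k n) + 1 \<le> A * (real (max 1 k) * ln (real (n + k) + 3))"
    using num_primes_polylog_bound[OF assms] by blast
  define D where "D = log 2 (2 * A) + 2 / ln 2 + 1"
  have D: "0 \<le> D" using A by (simp add: D_def)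
  show ?thesis
  proof
    show "0 \<le> 16 * A * D" using A D by simp
    fix n k p
    assume p: "p \<in> set (first_primes (num_primes c k n))"
    define m where "m = real (num_primes c k n)"
    define a where "a = real (max 1 k)"
    define l where "l = ln (real (n + k) + 3)"
    have a: "1 \<le> a" and l: "1 \<le> l" "ln a \<le> l"
      using ln_ge_one by (auto simp: a_def l_def)
    have m: "m + 1 \<le> A * (a * l)" using m_le by (simp add: m_def a_def l_def)
    have "log 2 (2 * (m + 1)) + 1 \<le> log 2 (2 * (A * (a * l))) + 1"
      using m by (simp add: m_def)
    also have "\<dots> \<le> D * l"
      unfolding D_def using A a l by (rule log_two_le_linear)
    finally have "log 2 (2 * (m + 1)) + 1 \<le> D * l" .
    moreover have "0 \<le> log 2 (2 * (m + 1)) + 1" by (simp add: m_def)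
    ultimately have "16 * (m + 1) * (log 2 (2 * (m + 1)) + 1) \<le> 16 * (A * (a * l)) * (D * l)"
      using m by (intro mult_mono) (auto simp: m_def)
    thus "real p \<le> 16 * A * D * real (max 1 k) * ln (real (n + k) + 3) ^ 2"
      using first_primes_le[OF p]
      by (simp add: m_def a_def l_def power2_eq_square algebra_simps)
  qed
qed

lemma cost_factor_le:
  fixes x nn kk nu Q C :: real
  assumes Q: "1 \<le> Q" and x: "0 \<le> x" "x \<le> C * Q"
    and nn: "0 \<le> nn" "nn \<le> nu" and nu: "1 \<le> nu" and kk: "0 \<le> kk" "kk \<le> Q"
  shows "2 * nn * nn + nn + x * (6 * nn * nn + 2 * nn) + kk * (nn * (2 * nn + 1))
    \<le> (8 * C + 6) * Q * nu\<^sup>2"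
proof -
  have nn2: "nn * nn \<le> nu\<^sup>2" using nn by (simp add: power2_eq_square mult_mono)
  have "nu \<le> nu\<^sup>2" using mult_left_mono[OF nu, of nu] nu by (simp add: power2_eq_square)
  hence nnnu: "nn \<le> nu\<^sup>2" using nn by linarith
  have "6 * nn * nn + 2 * nn \<le> 8 * nu\<^sup>2" using nn2 nnnu by linarith
  hence "x * (6 * nn * nn + 2 * nn) \<le> (C * Q) * (8 * nu\<^sup>2)"
    using x nn by (intro mult_mono) auto
  moreover have "kk * (nn * (2 * nn + 1)) \<le> Q * (3 * nu\<^sup>2)"
  proof (rule mult_mono)
    have "nn * (2 * nn + 1) = 2 * (nn * nn) + nn" by (simp add: algebra_simps)
    thus "nn * (2 * nn + 1) \<le> 3 * nu\<^sup>2" using nn2 nnnu by linarith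
  qed (use Q nn kk in auto)
  moreover have "3 * nu\<^sup>2 \<le> Q * (3 * nu\<^sup>2)"
    using mult_right_mono[OF Q, of "3 * nu\<^sup>2"] by simp
  ultimately show ?thesis
    using nn2 nnnu by (simp add: algebra_simps)
qed

lemma algorithm1_cost_bound_le:
  fixes X n k :: nat and C l :: real
  assumes l: "1 \<le> l" and X: "real X \<le> C * real (max 1 k) * l\<^sup>2"
  shows "real (algorithm1_cost_bound X n k)
    \<le> ((C + 2)\<^sup>2 + (C + 1) * (8 * C + 6) + 1) * real (max 1 k) ^ 2 * real (max 1 n) ^ 2 * l ^ 4"
proof -
  define x nn kk a nu where "x = real X" and "nn = real n" and "kk = real k"
    and "a = real (max 1 k)" and "nu = real (max 1 n)"
  define Q where "Q = a * l\<^sup>2"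
  have a: "1 \<le> a" "kk \<le> a" and nu: "1 \<le> nu" "nn \<le> nu"
    and pos: "0 \<le> x" "0 \<le> nn" "0 \<le> kk"
    by (simp_all add: a_def nu_def x_def nn_def kk_def)
  have "1 \<le> l\<^sup>2" using l by (simp add: one_le_power)
  hence "a \<le> Q" using a mult_left_mono[of 1 "l\<^sup>2" a] by (simp add: Q_def)
  hence Q: "1 \<le> Q" "kk \<le> Q" using a by simp_all
  have xQ: "x \<le> C * Q" using X by (simp add: x_def Q_def a_def mult.assoc)
  hence "0 \<le> C * Q" using pos(1) by linarith
  hence C: "0 \<le> C" using Q(1) by (simp add: zero_le_mult_iff)
  have nu2: "1 \<le> nu\<^sup>2" using nu by (simp add: one_le_power)
  have nn2: "nn * nn \<le> nu\<^sup>2" using nu pos by (simp add: power2_eq_square mult_mono)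
  have "(x + 2)\<^sup>2 \<le> ((C + 2) * Q)\<^sup>2"
    using xQ Q pos by (intro power_mono) (simp_all add: algebra_simps)
  also have "\<dots> \<le> ((C + 2) * Q)\<^sup>2 * nu\<^sup>2"
    using mult_left_mono[OF nu2] by simp
  finally have a1: "(x + 2)\<^sup>2 \<le> ((C + 2) * Q)\<^sup>2 * nu\<^sup>2" .
  have a2: "(x + 1) * (2 * nn * nn + nn + x * (6 * nn * nn + 2 * nn) + kk * (nn * (2 * nn + 1)))
      \<le> ((C + 1) * Q) * ((8 * C + 6) * Q * nu\<^sup>2)"
    using xQ Q C pos cost_factor_le[OF Q(1) pos(1) xQ pos(2) nu(2) nu(1) pos(3) Q(2)]
    by (intro mult_mono) (auto simp: algebra_simps)
  have a3: "nn * nn \<le> Q\<^sup>2 * nu\<^sup>2"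
    using nn2 Q mult_right_mono[of 1 "Q\<^sup>2" "nu\<^sup>2"] by (simp add: one_le_power)
  have "real (algorithm1_cost_bound X n k)
      = (x + 2)\<^sup>2 + (x + 1) * (2 * nn * nn + nn + x * (6 * nn * nn + 2 * nn) + kk * (nn * (2 * nn + 1)))
        + nn * nn"
    by (simp only: algorithm1_cost_bound_def x_def nn_def kk_def
        of_nat_add of_nat_mult of_nat_power of_nat_numeral of_nat_1)
  also have "\<dots> \<le> ((C + 2) * Q)\<^sup>2 * nu\<^sup>2 + ((C + 1) * Q) * ((8 * C + 6) * Q * nu\<^sup>2) + Q\<^sup>2 * nu\<^sup>2"
    using a1 a2 a3 by linarith
  also have "\<dots> = ((C + 2)\<^sup>2 + (C + 1) * (8 * C + 6) + 1) * a ^ 2 * nu ^ 2 * l ^ 4"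
    unfolding Q_def by algebra
  finally show ?thesis
    by (simp only: a_def nu_def)
qed

lemma algorithm1_cost_polylog:
  assumes "separating_const c"
  obtains K where "\<And>n k (A :: 'a::ring_1 matrix) B C'. num_errors n A B C' \<le> k \<Longrightarrow>
    real (snd (algorithm1 c n k A B C'))
      \<le> K * real (max 1 k) ^ 2 * real (max 1 n) ^ 2 * ln (real (n + k) + 3) ^ 4"
proof -
  obtain C where C: "0 \<le> C"
    and prime_le: "\<And>n k p. p \<in> set (first_primes (num_primes c k n))
           \<Longrightarrow> real p \<le> C * real (max 1 k) * ln (real (n + k) + 3) ^ 2"
    using first_primes_polylog_bound[OF separating_const_pos[OF assms]] by blast
  show ?thesis
  proof
    fix n k and A B C' :: "'a matrix"
    assume errs: "num_errors n A B C' \<le> k"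
    define X where "X = nat \<lfloor>C * real (max 1 k) * ln (real (n + k) + 3) ^ 2\<rfloor>"
    have "\<forall>p \<in> set (first_primes (num_primes c k n)). p \<le> X"
      using prime_le le_nat_floor by (simp add: X_def)
    hence "real (snd (algorithm1 c n k A B C')) \<le> real (algorithm1_cost_bound X n k)"
      using algorithm1_cost_le[OF errs] by (simp only: of_nat_le_iff)
    also have "\<dots> \<le> ((C + 2)\<^sup>2 + (C + 1) * (8 * C + 6) + 1)
        * real (max 1 k) ^ 2 * real (max 1 n) ^ 2 * ln (real (n + k) + 3) ^ 4"
      using C ln_ge_one[of "real (n + k) + 3"] of_nat_floor[of "C * real (max 1 k) * ln (real (n + k) + 3) ^ 2"]
      by (intro algorithm1_cost_bound_le) (auto simp: X_def)
    finally show "real (snd (algorithm1 c n k A B C'))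
        \<le> ((C + 2)\<^sup>2 + (C + 1) * (8 * C + 6) + 1)
          * real (max 1 k) ^ 2 * real (max 1 n) ^ 2 * ln (real (n + k) + 3) ^ 4" .
  qed
qed

theorem lemma2:
  fixes c :: real
  assumes "separating_const c"
  shows "\<exists>K d. \<forall>n k (A :: 'a::ring_1 matrix) B C'.
           num_errors n A B C' \<le> k \<longrightarrow>
             (\<forall>i \<in> {1..n}. \<forall>j \<in> {1..n}. fst (algorithm1 c n k A B C') i j = matprod n A B i j)
           \<and> real (snd (algorithm1 c n k A B C'))
               \<le> K * real (max 1 k) ^ 2 * real (max 1 n) ^ 2 * ln (real (n + k) + 3) ^ d"
proof -
  obtain K where cost: "\<And>n k (A :: 'a matrix) B C'. num_errors n A B C' \<le> k \<Longrightarrow>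
      real (snd (algorithm1 c n k A B C'))
        \<le> K * real (max 1 k) ^ 2 * real (max 1 n) ^ 2 * ln (real (n + k) + 3) ^ 4"
    using algorithm1_cost_polylog[OF assms] by blast
  have correct: "fst (algorithm1 c n k A B C') i j = matprod n A B i j"
    if "num_errors n A B C' \<le> k" "i \<in> {1..n}" "j \<in> {1..n}" for n k i j and A B C' :: "'a matrix"
    using algorithm1_correct[OF assms that(1), of i j] that(2,3) by (simp add: wrong_entries_def)
  show ?thesis
    using cost correct by blast
qed

end
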